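(* Let $c\ge 2$ be an integer and $\lambda,\mu,\alpha>0$ with $\lambda<c\mu$. Let $(\pi_{i,j})_{(i,j)\in\mathcal S}$ be the stationary distribution of the continuous-time Markov chain on $\mathcal S=\{(i,j):0\le i\le c,\ j\ge i\}$ whose only transitions are: $(i,j)\to(i,j+1)$ at rate $\lambda$; $(i,j)\to(i+1,j)$ at rate $\min(j-i,c-i)\alpha$ for $i<c$, $j>i$; $(i,j)\to(i,j-1)$ at rate $i\mu$ for $i\ge1$, $j>i$; $(i,i)\to(i-1,i-1)$ at rate $i\mu$ for $i\ge 1$. Let $f_1(z)=(\lambda+\mu+(c-1)\alpha)z-\lambda z^2-\mu$, with roots $z_1=\frac{\lambda+\mu+(c-1)\alpha-\sqrt{(\lambda+\mu+(c-1)\alpha)^2-4\lambda\mu}}{2\lambda}$ and $\hat z_1=\frac{\lambda+\mu+(c-1)\alpha+\sqrt{(\lambda+\mu+(c-1)\alpha)^2-4\lambda\mu}}{2\lambda}$ (so $0<z_1<1<\hat z_1$), and let $\hat z_0=(\lambda+c\alpha)/\lambda$. Define $\widehat\Pi_0(z)=\sum_{j\ge c}\pi_{0,j}z^{j}$ and $\widehat\Pi_1(z)=\sum_{j\ge c}\pi_{1,j}z^{j-1}$. Define $a^{(1)}_c=\frac{c\alpha\widehat\Pi_0(z_1)}{\mu z_1^{c-1}}$, $b^{(1)}_c=\frac{\lambda z_1}{\mu}$, and for $j=c-1,c-2,\dots,1$, $$a^{(1)}_j=\frac{j\alpha\pi_{0,j}+\mu a^{(1)}_{j+1}}{\lambda+\mu+(j-1)\alpha-\mu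 b^{(1)}_{j+1}},\qquad b^{(1)}_j=\frac{\lambda}{\lambda+\mu+(j-1)\alpha-\mu b^{(1)}_{j+1}}.$$ Then: (i) $\pi_{1,j}=a^{(1)}_j+b^{(1)}_j\pi_{1,j-1}$ for $2\le j\le c$; (ii) $a^{(1)}_j>0$ and $0<b^{(1)}_j<\lambda/\mu$ for $j=1,\dots,c$; (iii) if $\hat z_0\neq\hat z_1$, then for all complex $z$ with $|z|\le 1$, $$\widehat\Pi_1(z)=z^{c-1}\left(\frac{A_{1,0}}{\hat z_0-z}+\frac{A_{1,1}}{\hat z_1-z}\right),\quad A_{1,0}=\frac{c\alpha\,\pi_{0,c-1}\hat z_0}{f_1(\hat z_0)},\quad A_{1,1}=\pi_{1,c-1}-A_{1,0}.$$
   Context: The chain models an M/M/$c$ queue with setup times under the ON-OFF policy: $i$ is the number of busy servers, $j$ the number of jobs in the system; arrivals are Poisson($\lambda$), services exp($\mu$), setups exp($\alpha$), and $\min(j-i,c-i)$ servers are in setup in state $(i,j)$. The condition $\lambda<c\mu$ guarantees a unique stationary distribution. *)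

theory Defs
  imports "HOL-Analysis.Analysis"
begin

type_synonym state = "nat \<times> nat"

definition stateS :: "nat \<Rightarrow> state set" where
  "stateS c = {(i,j). i \<le> c \<and> i \<le> j}"

definition rate :: "nat \<Rightarrow> real \<Rightarrow> real \<Rightarrow> real \<Rightarrow> state \<Rightarrow> state \<Rightarrow> real" where
  "rate c lam mu alpha s t =
     (let i = fst s; j = snd s in
       (if t = (i, j + 1) then lam else 0)
     + (if i < c \<and> j > i \<and> t = (i + 1, j) then real (min (j - i) (c - i)) * alpha else 0)
     + (if i \<ge> 1 \<and> j > i \<and> t = (i, j - 1) then real i * mu else 0)
     + (if i \<ge> 1 \<and> j = i \<and> t = (i - 1, i - 1) then real i * mu else 0))"

text \<open>A finite window containing all states reachable from, or leading into, (i,j) in one step.\<close>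
definition window :: "nat \<Rightarrow> state \<Rightarrow> state set" where
  "window c s = {t. t \<in> stateS c \<and> snd t \<le> snd s + 1 \<and> t \<noteq> s}"

definition out_rate :: "nat \<Rightarrow> real \<Rightarrow> real \<Rightarrow> real \<Rightarrow> state \<Rightarrow> real" where
  "out_rate c lam mu alpha s = (\<Sum>t\<in>window c s. rate c lam mu alpha s t)"

definition stationary :: "nat \<Rightarrow> real \<Rightarrow> real \<Rightarrow> real \<Rightarrow> (state \<Rightarrow> real) \<Rightarrow> bool" where
  "stationary c lam mu alpha p \<longleftrightarrow>
     (\<forall>s\<in>stateS c. p s \<ge> 0) \<and>
     (p has_sum 1) (stateS c) \<and>
     (\<forall>s\<in>stateS c. p s * out_rate c lam mu alpha s =
        (\<Sum>t\<in>window c s. p t * rate c lam mu alpha t s))"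

definition f1 :: "nat \<Rightarrow> real \<Rightarrow> real \<Rightarrow> real \<Rightarrow> real \<Rightarrow> real" where
  "f1 c lam mu alpha z = (lam + mu + (real c - 1) * alpha) * z - lam * z\<^sup>2 - mu"

definition z1 :: "nat \<Rightarrow> real \<Rightarrow> real \<Rightarrow> real \<Rightarrow> real" where
  "z1 c lam mu alpha =
     (lam + mu + (real c - 1) * alpha
       - sqrt ((lam + mu + (real c - 1) * alpha)\<^sup>2 - 4 * lam * mu)) / (2 * lam)"

definition zhat1 :: "nat \<Rightarrow> real \<Rightarrow> real \<Rightarrow> real \<Rightarrow> real" where
  "zhat1 c lam mu alpha =
     (lam + mu + (real c - 1) * alpha
       + sqrt ((lam + mu + (real c - 1) * alpha)\<^sup>2 - 4 * lam * mu)) / (2 * lam)"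

definition zhat0 :: "nat \<Rightarrow> real \<Rightarrow> real \<Rightarrow> real" where
  "zhat0 c lam alpha = (lam + real c * alpha) / lam"

definition Pi0hat :: "nat \<Rightarrow> (state \<Rightarrow> real) \<Rightarrow> real \<Rightarrow> real" where
  "Pi0hat c p z = (\<Sum>\<^sub>\<infinity>j\<in>{c..}. p (0, j) * z ^ j)"

definition Pi1hat :: "nat \<Rightarrow> (state \<Rightarrow> real) \<Rightarrow> complex \<Rightarrow> complex" where
  "Pi1hat c p z = (\<Sum>\<^sub>\<infinity>j\<in>{c..}. complex_of_real (p (1, j)) * z ^ (j - 1))"

text \<open>The pair (a_j, b_j) computed by backward recursion, indexed by k = c - j.\<close>
primrec ab_rec :: "nat \<Rightarrow> real \<Rightarrow> real \<Rightarrow> real \<Rightarrow> (state \<Rightarrow> real) \<Rightarrow> nat \<Rightarrow> real \<times> real" where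
  "ab_rec c lam mu alpha p 0 =
     (real c * alpha * Pi0hat c p (z1 c lam mu alpha) / (mu * (z1 c lam mu alpha) ^ (c - 1)),
      lam * z1 c lam mu alpha / mu)"
| "ab_rec c lam mu alpha p (Suc k) =
     (let (a', b') = ab_rec c lam mu alpha p k; j = c - Suc k;
          d = lam + mu + (real j - 1) * alpha - mu * b' in
      ((real j * alpha * p (0, j) + mu * a') / d, lam / d))"

definition a1 :: "nat \<Rightarrow> real \<Rightarrow> real \<Rightarrow> real \<Rightarrow> (state \<Rightarrow> real) \<Rightarrow> nat \<Rightarrow> real" where
  "a1 c lam mu alpha p j = fst (ab_rec c lam mu alpha p (c - j))"

definition b1 :: "nat \<Rightarrow> real \<Rightarrow> real \<Rightarrow> real \<Rightarrow> (state \<Rightarrow> real) \<Rightarrow> nat \<Rightarrow> real" where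
  "b1 c lam mu alpha p j = snd (ab_rec c lam mu alpha p (c - j))"

end

theory Submission
  imports Defs
begin

(*
  Balance at level 0 makes pi(0,j) geometric with ratio rho = 1/zhat0 from j = c - 1 on, and
  pi(0,0) > 0 because otherwise the balance equations force pi = 0.  For j >= c the balance
  equations at level 1 form a second-order linear recurrence with a geometric forcing term,
  whose characteristic roots are the reciprocals 1/z1 > 1 and 1/zhat1 < 1 of the roots of f1.
  A solution bounded by 1 cannot contain the growing mode, which leaves the first-order
  recursion pi(1,j+1) = a_c rho^(j-c+1) + b_c pi(1,j) with b_c = lam z1 / mu = 1/zhat1;
  summing the geometric tail of level 0 at z1 identifies a_c with a1(c).  Descending the
  level-1 balance equations from j = c gives (i) and (ii), and solving the first-order
  recursion gives pi(1,j) as a combination of rho^k and zhat1^-k, whose generating function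
  is the partial fraction (iii).
*)

lemma has_sum_geometric_atLeast:
  fixes x :: "'a::{real_normed_field, banach}"
  assumes "norm x < 1"
  shows "((\<lambda>j. x ^ (j - m)) has_sum (1 / (1 - x))) {m..}"
proof -
  have "((\<lambda>n. x ^ n) has_sum (1 / (1 - x))) UNIV"
    using assms by (intro norm_summable_imp_has_sum geometric_sums)
      (simp_all add: norm_power summable_geometric)
  also have "?this \<longleftrightarrow> ?thesis"
    by (intro has_sum_reindex_bij_witness[of _ "\<lambda>j. j - m" "\<lambda>n. n + m"]) auto
  finally show ?thesis .
qed

lemma norm_of_real_mult_lt_1:
  fixes z :: "'a::real_normed_div_algebra"
  assumes "0 \<le> r" "r < 1" "norm z \<le> 1"
  shows "norm (of_real r * z) < 1"
proof -
  have "norm (of_real r * z) = r * norm z"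
    using assms(1) by (simp add: norm_mult)
  also have "\<dots> \<le> r"
    using mult_left_le[OF assms(3,1)] .
  finally show ?thesis
    using assms(2) by linarith
qed

lemma backward_geometric_bounded_eq_0:
  fixes e :: "nat \<Rightarrow> 'a::real_normed_field"
  assumes step: "\<And>k. e k = z * e (Suc k)" and "norm z < 1" and bound: "\<And>k. norm (e k) \<le> M"
  shows "e k = 0"
proof -
  have pow: "e k = z ^ n * e (k + n)" for n
    by (induction n) (simp_all, metis step)
  have "(\<lambda>n. norm z ^ n * M) \<longlonglongrightarrow> 0 * M"
    using \<open>norm z < 1\<close> by (intro tendsto_mult LIMSEQ_power_zero) simp_all
  moreover have "norm (e k) \<le> norm z ^ n * M" for n
    unfolding pow[of n] norm_mult norm_power
    by (intro mult_left_mono bound) simp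
  ultimately have "norm (e k) \<le> 0"
    by (intro LIMSEQ_le_const[where X = "\<lambda>n. norm z ^ n * M"]) auto
  then show ?thesis by simp
qed

lemma first_order_recurrence_closed_form:
  fixes x :: "nat \<Rightarrow> 'a::comm_ring_1"
  assumes "\<And>k. x (Suc k) = s * x k + A * (r - s) * r ^ k"
  shows "x k = A * r ^ k + (x 0 - A) * s ^ k"
proof (induction k)
  case (Suc k)
  show ?case
    unfolding assms Suc by (simp add: algebra_simps)
qed simp

lemma partial_fraction_coefficient:
  fixes K lam mu z0 zl zh :: real
  assumes "z0 \<noteq> 0" "zl \<noteq> 0" "zh \<noteq> 0" "lam \<noteq> 0" "z0 \<noteq> zl" "z0 \<noteq> zh"
    and "lam * zl * zh = mu"
  shows "K * z0 / (- lam * (z0 - zl) * (z0 - zh)) * (1 / z0 - 1 / zh) = K * zl / (mu * (z0 - zl))"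
proof -
  have "z0 - zl \<noteq> 0" "z0 - zh \<noteq> 0"
    using assms by auto
  moreover have "1 / z0 - 1 / zh = - (z0 - zh) / (z0 * zh)"
    using assms by (simp add: field_simps)
  ultimately show ?thesis
    using assms by (simp add: divide_simps) algebra
qed

section \<open>Global balance equations\<close>

lemma rate_from_eq:
  "rate c lam mu alpha (i, j) t =
     (if t = (i, j + 1) then lam else 0)
   + (if t = (i + 1, j) then (if i < c \<and> i < j then real (min (j - i) (c - i)) * alpha else 0) else 0)
   + (if t = (i, j - 1) then (if 1 \<le> i \<and> i < j then real i * mu else 0) else 0)
   + (if t = (i - 1, i - 1) then (if 1 \<le> i \<and> j = i then real i * mu else 0) else 0)"
  unfolding rate_def Let_def by (auto simp: conj_commute)

lemma rate_to_eq:
  assumes "i \<le> j"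
  shows "rate c lam mu alpha t (i, j) =
     (if t = (i, j - 1) then (if 1 \<le> j then lam else 0) else 0)
   + (if t = (i - 1, j) then (if 1 \<le> i \<and> i - 1 < c \<and> i - 1 < j
                             then real (min (j - (i - 1)) (c - (i - 1))) * alpha else 0) else 0)
   + (if t = (i, j + 1) then (if 1 \<le> i then real i * mu else 0) else 0)
   + (if t = (i + 1, i + 1) then (if j = i then real (i + 1) * mu else 0) else 0)"
proof -
  obtain a b where t: "t = (a, b)" by (cases t)
  have "(if (i, j) = (a, b + 1) then lam else 0)
      = (if (a, b) = (i, j - 1) then (if 1 \<le> j then lam else 0) else 0)"
    and "(if a < c \<and> b > a \<and> (i, j) = (a + 1, b) then real (min (b - a) (c - a)) * alpha else 0)
      = (if (a, b) = (i - 1, j) then (if 1 \<le> i \<and> i - 1 < c \<and> i - 1 < j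
                                     then real (min (j - (i - 1)) (c - (i - 1))) * alpha else 0) else 0)"
    and "(if a \<ge> 1 \<and> b > a \<and> (i, j) = (a, b - 1) then real a * mu else 0)
      = (if (a, b) = (i, j + 1) then (if 1 \<le> i then real i * mu else 0) else 0)"
    and "(if a \<ge> 1 \<and> b = a \<and> (i, j) = (a - 1, a - 1) then real a * mu else 0)
      = (if (a, b) = (i + 1, i + 1) then (if j = i then real (i + 1) * mu else 0) else 0)"
    using assms by auto
  then show ?thesis unfolding t rate_def Let_def fst_conv snd_conv by argo
qed

lemma finite_window: "finite (window c s)"
proof (rule finite_subset)
  show "window c s \<subseteq> {0..c} \<times> {0..snd s + 1}"
    by (auto simp: window_def stateS_def)
qed simp

lemma out_rate_eq:
  assumes "(i, j) \<in> stateS c"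
  shows "out_rate c lam mu alpha (i, j) = lam
    + (if i < c \<and> i < j then real (min (j - i) (c - i)) * alpha else 0)
    + (if 1 \<le> i \<and> i < j then real i * mu else 0)
    + (if 1 \<le> i \<and> j = i then real i * mu else 0)"
  using assms unfolding out_rate_def rate_from_eq
  by (simp add: sum.distrib finite_window) (auto simp: window_def stateS_def)

lemma inflow_eq:
  assumes "(i, j) \<in> stateS c"
  shows "(\<Sum>t\<in>window c (i, j). p t * rate c lam mu alpha t (i, j)) =
      (if 1 \<le> j \<and> i \<le> j - 1 then p (i, j - 1) * lam else 0)
    + (if 1 \<le> i then p (i - 1, j) * (real (min (j - (i - 1)) (c - (i - 1))) * alpha) else 0)
    + (if 1 \<le> i then p (i, j + 1) * (real i * mu) else 0)
    + (if j = i \<and> i + 1 \<le> c then p (i + 1, i + 1) * (real (i + 1) * mu) else 0)"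
proof -
  have ij: "i \<le> j" using assms by (simp add: stateS_def)
  have "p t * rate c lam mu alpha t (i, j) =
       (if t = (i, j - 1) then p (i, j - 1) * (if 1 \<le> j then lam else 0) else 0)
     + (if t = (i - 1, j) then p (i - 1, j) * (if 1 \<le> i \<and> i - 1 < c \<and> i - 1 < j
                             then real (min (j - (i - 1)) (c - (i - 1))) * alpha else 0) else 0)
     + (if t = (i, j + 1) then p (i, j + 1) * (if 1 \<le> i then real i * mu else 0) else 0)
     + (if t = (i + 1, i + 1) then p (i + 1, i + 1) * (if j = i then real (i + 1) * mu else 0) else 0)"
    for t unfolding rate_to_eq[OF ij] by (simp add: distrib_left)
  then have "(\<Sum>t\<in>window c (i, j). p t * rate c lam mu alpha t (i, j)) =
       (if (i, j - 1) \<in> window c (i, j) then p (i, j - 1) * (if 1 \<le> j then lam else 0) else 0)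
     + (if (i - 1, j) \<in> window c (i, j) then p (i - 1, j) * (if 1 \<le> i \<and> i - 1 < c \<and> i - 1 < j
                             then real (min (j - (i - 1)) (c - (i - 1))) * alpha else 0) else 0)
     + (if (i, j + 1) \<in> window c (i, j) then p (i, j + 1) * (if 1 \<le> i then real i * mu else 0) else 0)
     + (if (i + 1, i + 1) \<in> window c (i, j)
        then p (i + 1, i + 1) * (if j = i then real (i + 1) * mu else 0) else 0)"
    by (simp only: sum.distrib sum.delta[OF finite_window])
  moreover have "(i, j - 1) \<in> window c (i, j) \<longleftrightarrow> 1 \<le> j \<and> i \<le> j - 1"
    and "1 \<le> i \<Longrightarrow> (i - 1, j) \<in> window c (i, j) \<and> i - 1 < c \<and> i - 1 < j"
    and "(i, j + 1) \<in> window c (i, j)"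
    and "(i + 1, i + 1) \<in> window c (i, j) \<longleftrightarrow> i + 1 \<le> c"
    using assms by (auto simp: window_def stateS_def)
  ultimately show ?thesis by auto
qed

section \<open>The roots of f1\<close>

locale onoff_parameters =
  fixes c :: nat and lam mu alpha :: real
  assumes c_ge_2: "c \<ge> 2" and lam_pos: "lam > 0" and mu_pos: "mu > 0" and alpha_pos: "alpha > 0"
begin

abbreviation "L \<equiv> lam + mu + (real c - 1) * alpha"
abbreviation "zl \<equiv> z1 c lam mu alpha"
abbreviation "zh \<equiv> zhat1 c lam mu alpha"

definition \<rho> :: real where "\<rho> = lam / (lam + real c * alpha)"
definition \<sigma> :: real where "\<sigma> = lam * zl / mu"

lemma discriminant_pos: "L\<^sup>2 - 4 * lam * mu > 0"
proof -
  have "L > lam + mu"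
    using c_ge_2 alpha_pos by simp
  then have "L\<^sup>2 > (lam + mu)\<^sup>2"
    using lam_pos mu_pos by (simp add: power_strict_mono)
  moreover have "(lam + mu)\<^sup>2 - 4 * lam * mu = (lam - mu)\<^sup>2"
    by (simp add: power2_eq_square algebra_simps)
  ultimately show ?thesis by (smt (verit) zero_le_power2)
qed

lemma z1_times_zhat1: "zl * zh = mu / lam"
  and z1_plus_zhat1: "zl + zh = L / lam"
proof -
  have "(L - sqrt (L\<^sup>2 - 4 * lam * mu)) * (L + sqrt (L\<^sup>2 - 4 * lam * mu)) = 4 * lam * mu"
    using discriminant_pos by (simp add: algebra_simps power2_eq_square)
  then show "zl * zh = mu / lam"
    unfolding z1_def zhat1_def using lam_pos by (simp add: field_simps power2_eq_square)
  show "zl + zh = L / lam"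
    unfolding z1_def zhat1_def using lam_pos by (simp add: field_simps)
qed

lemma f1_factor: "f1 c lam mu alpha x = - lam * (x - zl) * (x - zh)"
proof -
  have "- lam * (x - zl) * (x - zh) = - lam * x\<^sup>2 + lam * (zl + zh) * x - lam * (zl * zh)"
    by (simp add: algebra_simps power2_eq_square)
  then show ?thesis
    unfolding f1_def z1_times_zhat1 z1_plus_zhat1 using lam_pos by simp
qed

lemma z1_lt_1: "zl < 1" and zhat1_gt_1: "zh > 1"
proof -
  have "zl \<le> zh"
    unfolding z1_def zhat1_def using lam_pos discriminant_pos by (simp add: divide_right_mono)
  moreover have "f1 c lam mu alpha 1 > 0"
    unfolding f1_def using c_ge_2 alpha_pos by simp
  moreover have "f1 c lam mu alpha 1 = lam * ((1 - zl) * (zh - 1))"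
    unfolding f1_factor by (simp add: algebra_simps)
  ultimately have "(1 - zl) * (zh - 1) > 0"
    using lam_pos by (simp add: zero_less_mult_iff)
  with \<open>zl \<le> zh\<close> show "zl < 1" "zh > 1"
    by (auto simp: zero_less_mult_iff)
qed

lemma z1_pos: "zl > 0"
  using z1_times_zhat1 zhat1_gt_1 lam_pos mu_pos by (smt (verit) divide_pos_pos mult_nonpos_nonneg)

lemma f1_z1: "lam * zl\<^sup>2 - L * zl + mu = 0"
  using f1_factor[of zl] unfolding f1_def by simp

lemma sigma_eq: "\<sigma> = 1 / zh"
  unfolding \<sigma>_def using z1_times_zhat1 zhat1_gt_1 lam_pos mu_pos by (simp add: field_simps)

lemma sigma_pos: "\<sigma> > 0" and sigma_lt_1: "\<sigma> < 1"
  using sigma_eq zhat1_gt_1 by auto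

lemma sigma_lt: "\<sigma> < lam / mu"
  unfolding \<sigma>_def using z1_lt_1 lam_pos mu_pos by (simp add: divide_strict_right_mono)

lemma rho_pos: "\<rho> > 0" and rho_lt_1: "\<rho> < 1"
  unfolding \<rho>_def using lam_pos alpha_pos c_ge_2 by (simp_all add: add_pos_pos)

lemma zhat0_eq: "zhat0 c lam alpha = 1 / \<rho>"
  unfolding zhat0_def \<rho>_def by simp

lemma zhat0_gt_1: "zhat0 c lam alpha > 1"
  unfolding zhat0_eq using rho_pos rho_lt_1 by simp

lemma zhat0_gt_z1: "zhat0 c lam alpha - zl > 0"
  using zhat0_gt_1 z1_lt_1 by simp

lemma denominator_gt_mu:
  assumes "1 \<le> j" "b < lam / mu"
  shows "lam + mu + (real j - 1) * alpha - mu * b > mu"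
proof -
  have "mu * b < lam"
    using assms(2) mu_pos by (simp add: pos_less_divide_eq mult.commute)
  moreover have "(real j - 1) * alpha \<ge> 0"
    using assms(1) alpha_pos by simp
  ultimately show ?thesis by linarith
qed

end

lemma a1_b1_step:
  assumes "j < c"
  shows "a1 c lam mu alpha p j = (real j * alpha * p (0, j) + mu * a1 c lam mu alpha p (Suc j))
           / (lam + mu + (real j - 1) * alpha - mu * b1 c lam mu alpha p (Suc j))"
    and "b1 c lam mu alpha p j
         = lam / (lam + mu + (real j - 1) * alpha - mu * b1 c lam mu alpha p (Suc j))"
  using assms by (simp_all add: a1_def b1_def Let_def Suc_diff_Suc[OF assms, symmetric] split: prod.split)

section \<open>The stationary distribution at levels 0 and 1\<close>

locale onoff_stationary = onoff_parameters +
  fixes p :: "nat \<times> nat \<Rightarrow> real"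
  assumes stationary: "stationary c lam mu alpha p"
begin

lemma p_nonneg: "i \<le> c \<Longrightarrow> i \<le> j \<Longrightarrow> p (i, j) \<ge> 0"
  using stationary by (auto simp: stationary_def stateS_def)

lemma p_has_sum: "(p has_sum 1) (stateS c)"
  using stationary by (simp add: stationary_def)

lemma p_le_1:
  assumes "i \<le> c" "i \<le> j"
  shows "p (i, j) \<le> 1"
proof -
  have "(p has_sum p (i, j)) {(i, j)}" by (rule has_sum_finiteI) auto
  then show ?thesis
    by (rule has_sum_mono_neutral[OF _ p_has_sum]) (use assms p_nonneg in \<open>auto simp: stateS_def\<close>)
qed

lemma balance:
  assumes "i \<le> c" "i \<le> j"
  shows "p (i, j) * (lam
    + (if i < c \<and> i < j then real (min (j - i) (c - i)) * alpha else 0)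
    + (if 1 \<le> i \<and> i < j then real i * mu else 0)
    + (if 1 \<le> i \<and> j = i then real i * mu else 0)) =
      (if 1 \<le> j \<and> i \<le> j - 1 then p (i, j - 1) * lam else 0)
    + (if 1 \<le> i then p (i - 1, j) * (real (min (j - (i - 1)) (c - (i - 1))) * alpha) else 0)
    + (if 1 \<le> i then p (i, j + 1) * (real i * mu) else 0)
    + (if j = i \<and> i + 1 \<le> c then p (i + 1, i + 1) * (real (i + 1) * mu) else 0)"
proof -
  have S: "(i, j) \<in> stateS c" using assms by (simp add: stateS_def)
  with stationary show ?thesis
    unfolding out_rate_eq[OF S, symmetric] inflow_eq[OF S, symmetric] stationary_def by blast
qed

lemma balance_level0:
  assumes "j \<ge> 1"
  shows "p (0, j) * (lam + real (min j c) * alpha) = lam * p (0, j - 1)"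
  using balance[of 0 j] assms c_ge_2 by simp

lemma balance_level1:
  assumes "j \<ge> 2"
  shows "p (1, j) * (lam + real (min (j - 1) (c - 1)) * alpha + mu)
     = lam * p (1, j - 1) + real (min j c) * alpha * p (0, j) + mu * p (1, j + 1)"
  using balance[of 1 j] assms c_ge_2 by (simp add: algebra_simps)

lemma balance_zero_propagates:
  assumes "i \<le> c" "i \<le> j" "p (i, j) = 0"
  shows "1 \<le> i \<Longrightarrow> p (i, j + 1) = 0" and "1 \<le> i \<Longrightarrow> p (i - 1, j) = 0"
    and "j = i \<Longrightarrow> i + 1 \<le> c \<Longrightarrow> p (i + 1, i + 1) = 0"
proof -
  define t1 where "t1 = (if 1 \<le> j \<and> i \<le> j - 1 then p (i, j - 1) * lam else 0)"
  define t2 where "t2 = (if 1 \<le> i then p (i - 1, j) * (real (min (j - (i - 1)) (c - (i - 1))) * alpha) else 0)"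
  define t3 where "t3 = (if 1 \<le> i then p (i, j + 1) * (real i * mu) else 0)"
  define t4 where "t4 = (if j = i \<and> i + 1 \<le> c then p (i + 1, i + 1) * (real (i + 1) * mu) else 0)"
  have "t1 + t2 + t3 + t4 = 0"
    using balance[OF assms(1,2)] assms(3) unfolding t1_def t2_def t3_def t4_def by simp
  moreover have "t1 \<ge> 0" "t2 \<ge> 0" "t3 \<ge> 0" "t4 \<ge> 0"
    unfolding t1_def t2_def t3_def t4_def using assms p_nonneg lam_pos mu_pos alpha_pos by auto
  ultimately have "t2 = 0" "t3 = 0" "t4 = 0" by linarith+
  with assms mu_pos alpha_pos
  show "1 \<le> i \<Longrightarrow> p (i, j + 1) = 0" and "1 \<le> i \<Longrightarrow> p (i - 1, j) = 0"
    and "j = i \<Longrightarrow> i + 1 \<le> c \<Longrightarrow> p (i + 1, i + 1) = 0"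
    unfolding t2_def t3_def t4_def by auto
qed

lemma p_eq_0_if_p00_eq_0:
  assumes z: "p (0, 0) = 0" and "i \<le> c" "i \<le> j"
  shows "p (i, j) = 0"
proof -
  have diagonal: "p (i, i) = 0" if "i \<le> c" for i
    using that by (induction i) (use z balance_zero_propagates(3) in fastforce)+
  have upper_levels: "p (i, i + k) = 0" if "1 \<le> i" "i \<le> c" for i k
    using that by (induction k) (use diagonal balance_zero_propagates(1) in fastforce)+
  show ?thesis
  proof (cases "i = 0")
    case True
    with \<open>i \<le> j\<close> upper_levels[of 1 "j - 1"] c_ge_2 show ?thesis
      by (cases j) (use z balance_zero_propagates(2)[of 1 j] in auto)
  next
    case False
    with assms upper_levels[of i "j - i"] show ?thesis by simp
  qed
qed

lemma p00_pos: "p (0, 0) > 0"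
proof (rule ccontr)
  assume "\<not> p (0, 0) > 0"
  then have "p (0, 0) = 0" using p_nonneg[of 0 0] by simp
  then have "(p has_sum 0) (stateS c)"
    using has_sum_0[of "stateS c" p] p_eq_0_if_p00_eq_0 by (auto simp: stateS_def)
  with p_has_sum show False using has_sum_unique by fastforce
qed

lemma p0_pos: "p (0, j) > 0"
proof (induction j)
  case (Suc j)
  have "p (0, Suc j) * (lam + real (min (Suc j) c) * alpha) = lam * p (0, j)"
    using balance_level0[of "Suc j"] by simp
  moreover have "lam + real (min (Suc j) c) * alpha > 0" "lam * p (0, j) > 0"
    using lam_pos alpha_pos Suc by (simp_all add: add_pos_nonneg)
  ultimately show ?case by (metis zero_less_mult_pos2)
qed (rule p00_pos)

abbreviation "q k \<equiv> p (1, c - 1 + k)"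
abbreviation "K \<equiv> real c * alpha * p (0, c - 1)"

lemma p0_tail: "p (0, c - 1 + k) = p (0, c - 1) * \<rho> ^ k"
proof (induction k)
  case (Suc k)
  have "p (0, c - 1 + Suc k) * (lam + real c * alpha) = lam * p (0, c - 1 + k)"
    using balance_level0[of "c - 1 + Suc k"] c_ge_2 by simp
  moreover have "lam + real c * alpha > 0"
    using lam_pos alpha_pos by (simp add: add_pos_nonneg)
  ultimately have "p (0, c - 1 + Suc k) = \<rho> * p (0, c - 1 + k)"
    unfolding \<rho>_def by (simp add: field_simps)
  with Suc show ?case by simp
qed simp

lemma q_recurrence:
  assumes "k \<ge> 1"
  shows "mu * q (Suc k) = L * q k - lam * q (k - 1) - K * \<rho> ^ k"
proof -
  have "min (c - 1 + k - 1) (c - 1) = c - 1" "min (c - 1 + k) c = c" "c - 1 + k - 1 = c - 1 + (k - 1)"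
    "real (c - 1) = real c - 1"
    using assms c_ge_2 by auto
  with balance_level1[of "c - 1 + k"] p0_tail[of k] assms c_ge_2 show ?thesis
    by (simp add: algebra_simps)
qed

lemma q_bounded: "0 \<le> q k" "q k \<le> 1"
  using p_nonneg p_le_1 c_ge_2 by auto

lemma Pi0hat_z1: "Pi0hat c p zl = p (0, c - 1) * zl ^ c / (zhat0 c lam alpha - zl)"
proof -
  have "norm (\<rho> * zl) < 1"
    using norm_of_real_mult_lt_1[of \<rho> zl] rho_pos rho_lt_1 z1_pos z1_lt_1 by simp
  then have "((\<lambda>j. p (0, c - 1) * \<rho> * zl ^ c * (\<rho> * zl) ^ (j - c)) has_sum
      (p (0, c - 1) * \<rho> * zl ^ c * (1 / (1 - \<rho> * zl)))) {c..}"
    by (intro has_sum_cmult_right has_sum_geometric_atLeast)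
  moreover have "p (0, j) * zl ^ j = p (0, c - 1) * \<rho> * zl ^ c * (\<rho> * zl) ^ (j - c)" if "j \<in> {c..}" for j
  proof -
    have "p (0, j) = p (0, c - 1) * \<rho> ^ Suc (j - c)"
      using p0_tail[of "Suc (j - c)"] that c_ge_2 by (simp add: Suc_diff_le)
    moreover have "zl ^ j = zl ^ c * zl ^ (j - c)"
      using that by (simp flip: power_add)
    ultimately show ?thesis
      by (simp add: power_mult_distrib)
  qed
  ultimately have "((\<lambda>j. p (0, j) * zl ^ j) has_sum
      (p (0, c - 1) * \<rho> * zl ^ c * (1 / (1 - \<rho> * zl)))) {c..}"
    by (subst has_sum_cong)
  then have "Pi0hat c p zl = p (0, c - 1) * \<rho> * zl ^ c * (1 / (1 - \<rho> * zl))"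
    unfolding Pi0hat_def by (rule infsumI)
  also have "\<dots> = p (0, c - 1) * zl ^ c / (1 / \<rho> - zl)"
    using rho_pos \<open>norm (\<rho> * zl) < 1\<close> by (simp add: field_simps)
  finally show ?thesis
    unfolding zhat0_eq .
qed

lemma a1_c_eq: "a1 c lam mu alpha p c = K * zl / (mu * (zhat0 c lam alpha - zl))"
proof -
  have "zl ^ c = zl * zl ^ (c - 1)"
    using c_ge_2 by (simp flip: power_Suc)
  moreover have "a1 c lam mu alpha p c = real c * alpha * Pi0hat c p zl / (mu * zl ^ (c - 1))"
    by (simp add: a1_def)
  ultimately show ?thesis
    unfolding Pi0hat_z1 using z1_pos by (simp add: ac_simps)
qed

lemma b1_c_eq: "b1 c lam mu alpha p c = \<sigma>"
  by (simp add: b1_def \<sigma>_def)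

lemma a1_c_pos: "a1 c lam mu alpha p c > 0"
  unfolding a1_c_eq using c_ge_2 alpha_pos p0_pos mu_pos z1_pos zhat0_gt_z1 by simp

lemma q_first_order: "q (Suc k) = \<sigma> * q k + a1 c lam mu alpha p c * \<rho> ^ k"
proof -
  define a where "a = a1 c lam mu alpha p c"
  define e where "e k = q (Suc k) - \<sigma> * q k - a * \<rho> ^ k" for k
  have a_eq: "mu * a * (1 - zl * \<rho>) = zl * K * \<rho>"
    unfolding a_def a1_c_eq zhat0_eq using mu_pos rho_pos zhat0_gt_z1 zhat0_eq
    by (simp add: field_simps)
  have \<sigma>_eq: "mu * \<sigma> = lam * zl"
    unfolding \<sigma>_def using mu_pos by simp
  have cancel: "mu * ((q1 - s * q0 - x * r) - z * (q2 - s * q1 - x * (t * r))) = 0"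
    if "mu * q2 = M * q1 - lam * q0 - C * (t * r)" "mu * s = lam * z"
      "mu * x * (1 - z * t) = z * C * t" "lam * z\<^sup>2 - M * z + mu = 0"
    for q0 q1 q2 s x r z M C t :: real
    using that by algebra
  txt \<open>The defect of the first-order recursion is a backward geometric sequence with ratio
    \<open>z1\<close>; being bounded, it vanishes.\<close>
  have "e k = zl * e (Suc k)" for k
  proof -
    have "mu * q (Suc (Suc k)) = L * q (Suc k) - lam * q k - K * (\<rho> * \<rho> ^ k)"
      using q_recurrence[of "Suc k"] by simp
    then have "mu * (e k - zl * e (Suc k)) = 0"
      unfolding e_def power_Suc by (rule cancel[OF _ \<sigma>_eq a_eq f1_z1])
    then show ?thesis using mu_pos by simp
  qed
  moreover have "norm zl < 1"
    using z1_pos z1_lt_1 by simp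
  moreover have "norm (e k) \<le> 1 + \<sigma> + \<bar>a\<bar>" for k
  proof -
    have "\<bar>a * \<rho> ^ k\<bar> \<le> \<bar>a\<bar>"
      using rho_pos rho_lt_1 by (simp add: abs_mult mult_left_le power_le_one)
    moreover have "0 \<le> \<sigma> * q k" "\<sigma> * q k \<le> \<sigma>"
      using q_bounded[of k] sigma_pos by (simp_all add: mult_left_le)
    ultimately show ?thesis
      unfolding e_def real_norm_def using q_bounded[of "Suc k"] by linarith
  qed
  ultimately have "e k = 0"
    by (rule backward_geometric_bounded_eq_0)
  then show ?thesis
    unfolding e_def a_def by simp
qed

lemma a1_b1_bounds:
  assumes "1 \<le> j" "j \<le> c"
  shows "a1 c lam mu alpha p j > 0 \<and> 0 < b1 c lam mu alpha p j \<and> b1 c lam mu alpha p j < lam / mu"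
  using assms(2,1)
proof (induction j rule: inc_induct)
  case base
  show ?case using a1_c_pos b1_c_eq sigma_pos sigma_lt by simp
next
  case (step j)
  define d where "d = lam + mu + (real j - 1) * alpha - mu * b1 c lam mu alpha p (Suc j)"
  have "d > mu"
    unfolding d_def using step by (intro denominator_gt_mu) auto
  moreover have "real j * alpha * p (0, j) + mu * a1 c lam mu alpha p (Suc j) > 0"
    using step alpha_pos mu_pos p0_pos[of j] by (simp add: add_nonneg_pos)
  ultimately show ?case
    unfolding a1_b1_step[OF \<open>j < c\<close>] d_def[symmetric] using lam_pos mu_pos
    by (simp add: divide_strict_left_mono)
qed

lemma p1_recursion:
  assumes "2 \<le> j" "j \<le> c"
  shows "p (1, j) = a1 c lam mu alpha p j + b1 c lam mu alpha p j * p (1, j - 1)"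
  using assms(2,1)
proof (induction j rule: inc_induct)
  case base
  show ?case using q_first_order[of 0] c_ge_2 b1_c_eq by simp
next
  case (step j)
  define d where "d = lam + mu + (real j - 1) * alpha - mu * b1 c lam mu alpha p (Suc j)"
  have "b1 c lam mu alpha p (Suc j) < lam / mu"
    using a1_b1_bounds[of "Suc j"] step by simp
  then have "d > 0"
    unfolding d_def using step mu_pos denominator_gt_mu[of j] by fastforce
  have "min (j - 1) (c - 1) = j - 1" "min j c = j" "real (j - 1) = real j - 1"
    using step by auto
  with balance_level1[of j] step have "p (1, j) * d
      = real j * alpha * p (0, j) + mu * a1 c lam mu alpha p (Suc j) + lam * p (1, j - 1)"
    unfolding d_def by (simp add: algebra_simps)
  with \<open>d > 0\<close> show ?case
    unfolding a1_b1_step[OF \<open>j < c\<close>] d_def[symmetric] by (simp add: field_simps)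
qed

section \<open>Generating function of level 1\<close>

abbreviation "A10 \<equiv> K * zhat0 c lam alpha / f1 c lam mu alpha (zhat0 c lam alpha)"

lemma A10_rho_sigma:
  assumes "zhat0 c lam alpha \<noteq> zh"
  shows "A10 * (\<rho> - \<sigma>) = a1 c lam mu alpha p c"
proof -
  have \<rho>_eq: "\<rho> = 1 / zhat0 c lam alpha"
    unfolding zhat0_eq by simp
  show ?thesis
    unfolding a1_c_eq f1_factor sigma_eq \<rho>_eq
  proof (rule partial_fraction_coefficient)
    show "lam * zl * zh = mu"
      using z1_times_zhat1 lam_pos by (simp add: field_simps)
  qed (use zhat0_gt_1 zhat1_gt_1 z1_pos lam_pos zhat0_gt_z1 assms in auto)
qed

lemma q_closed_form:
  assumes "zhat0 c lam alpha \<noteq> zh"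
  shows "q k = A10 * \<rho> ^ k + (q 0 - A10) * \<sigma> ^ k"
  using q_first_order A10_rho_sigma[OF assms]
  by (intro first_order_recurrence_closed_form[where x = q]) simp

lemma Pi1hat_eq:
  assumes "zhat0 c lam alpha \<noteq> zh" and "norm z \<le> 1"
  shows "Pi1hat c p z = z ^ (c - 1) *
    (complex_of_real A10 / (complex_of_real (zhat0 c lam alpha) - z)
     + complex_of_real (q 0 - A10) / (complex_of_real zh - z))"
proof -
  define A where "A = A10"
  define B where "B = q 0 - A10"
  define S where "S = z ^ (c - 1) * (of_real (A * \<rho>) * (1 / (1 - of_real \<rho> * z))
                                   + of_real (B * \<sigma>) * (1 / (1 - of_real \<sigma> * z)))"
  have small: "norm (complex_of_real r * z) < 1" if "0 < r" "r < 1" for r :: real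
    using that assms(2) by (intro norm_of_real_mult_lt_1) auto
  then have "((\<lambda>j. z ^ (c - 1) * (of_real (A * \<rho>) * (of_real \<rho> * z) ^ (j - c)
              + of_real (B * \<sigma>) * (of_real \<sigma> * z) ^ (j - c))) has_sum S) {c..}"
    unfolding S_def using rho_pos rho_lt_1 sigma_pos sigma_lt_1
    by (intro has_sum_cmult_right has_sum_add has_sum_geometric_atLeast) auto
  moreover have "complex_of_real (p (1, j)) * z ^ (j - 1)
      = z ^ (c - 1) * (of_real (A * \<rho>) * (of_real \<rho> * z) ^ (j - c)
              + of_real (B * \<sigma>) * (of_real \<sigma> * z) ^ (j - c))" if "j \<in> {c..}" for j
  proof -
    have "p (1, j) = A * \<rho> ^ Suc (j - c) + B * \<sigma> ^ Suc (j - c)"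
      using q_closed_form[OF assms(1), of "Suc (j - c)"] that c_ge_2
      unfolding A_def B_def by (simp add: Suc_diff_le)
    moreover have "z ^ (j - 1) = z ^ (c - 1) * z ^ (j - c)"
      using that c_ge_2 by (simp flip: power_add)
    ultimately show ?thesis
      by (simp add: power_mult_distrib algebra_simps)
  qed
  ultimately have "((\<lambda>j. complex_of_real (p (1, j)) * z ^ (j - 1)) has_sum S) {c..}"
    by (subst has_sum_cong)
  then have "Pi1hat c p z = S"
    unfolding Pi1hat_def by (rule infsumI)
  also have "\<dots> = z ^ (c - 1) * (of_real A / (of_real (1 / \<rho>) - z)
                                 + of_real B / (of_real (1 / \<sigma>) - z))"
  proof -
    have "of_real (X * r) * (1 / (1 - of_real r * z)) = of_real X / (of_real (1 / r) - z)"
      if "0 < r" "r < 1" for X r :: real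
    proof -
      have "1 - of_real r * z \<noteq> 0"
        using small[OF that] by auto
      with that show ?thesis
        by (simp add: field_simps)
    qed
    then show ?thesis
      unfolding S_def using rho_pos rho_lt_1 sigma_pos sigma_lt_1 by simp
  qed
  finally show ?thesis
    unfolding A_def B_def zhat0_eq sigma_eq by simp
qed

end

theorem lemma3p1:
  fixes c :: nat and lam mu alpha :: real and p :: "nat \<times> nat \<Rightarrow> real"
  assumes "c \<ge> 2" and "lam > 0" and "mu > 0" and "alpha > 0"
    and "lam < real c * mu"
    and "stationary c lam mu alpha p"
  shows "(\<forall>j. 2 \<le> j \<and> j \<le> c \<longrightarrow>
            p (1, j) = a1 c lam mu alpha p j + b1 c lam mu alpha p j * p (1, j - 1))
    \<and> (\<forall>j. 1 \<le> j \<and> j \<le> c \<longrightarrow>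
            a1 c lam mu alpha p j > 0 \<and> 0 < b1 c lam mu alpha p j
            \<and> b1 c lam mu alpha p j < lam / mu)
    \<and> (zhat0 c lam alpha \<noteq> zhat1 c lam mu alpha \<longrightarrow>
        (let A10 = real c * alpha * p (0, c - 1) * zhat0 c lam alpha
                     / f1 c lam mu alpha (zhat0 c lam alpha);
             A11 = p (1, c - 1) - A10 in
         \<forall>z::complex. norm z \<le> 1 \<longrightarrow>
           Pi1hat c p z = z ^ (c - 1) *
             (complex_of_real A10 / (complex_of_real (zhat0 c lam alpha) - z)
              + complex_of_real A11 / (complex_of_real (zhat1 c lam mu alpha) - z))))"
proof -
  interpret onoff_stationary c lam mu alpha p
    using assms by unfold_locales
  show ?thesis
    unfolding Let_def using p1_recursion a1_b1_bounds Pi1hat_eq by simp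
qed

end
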